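(* Let $m\in\mathbb R$ be the unique minimizing point of $M$, let $s>2$, and suppose there is $x_0>0$ with $\mathbb E[|D^+h(X_1,m+x)|^s]<\infty$ for all $x\in[-x_0,x_0]$. Then $\hat m_n\to m$ $\mathbb P$-$r$-quickly for every $r\in(0,s/2)$, i.e. $\mathbb E[L_\epsilon^r]<\infty$ for all $\epsilon>0$, where $L_\epsilon:=\sup\{k\in\mathbb N:|\hat m_k-m|>\epsilon\}$ (with $L_\epsilon:=0$ if this set is empty and $L_\epsilon:=\infty$ if it is unbounded).
   Context: Let $(S,\mathcal S,Q)$ be a probability space and $h:S\times\mathbb R\to\mathbb R$ such that $h(\cdot,t)$ is $\mathcal S$-measurable for every $t\in\mathbb R$ and $h(x,\cdot)$ is convex for every $x\in S$. For $f:\mathbb R\to\mathbb R$ convex, $D^+f$ and $D^-f$ denote its right and left derivatives; $D^\pm h(x,t)$ denotes the one-sided derivatives of $h(x,\cdot)$ at $t$. Assume $\int_S|D^+h(x,t)|\,Q(dx)<\infty$ and $\int_S|D^-h(x,t)|\,Q(dx)<\infty$ for all $t\in\mathbb R$. Fix $t_0\in\mathbb R$ and set $M(t):=\int_S (h(x,t)-h(x,t_0))\,Q(dx)$; $M$ is real-valued and convex with $D^\pm M(t)=\int_S D^\pm h(x,t)\,Q(dx)$. Let $X_1,X_2,\dots$ be i.i.d. $S$-valued random variables on a probability space $(\Omega,\mathcal A,\mathbb P)$ with common law $Q$, let $M_n(t):=\frac1n\sum_{i=1}^n (h(X_i,t)-h(X_i,t_0))$, and let $\hat m_n$ be the smallest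 minimizing point of $M_n$ (assumed to exist; it is a random variable). *)

theory Defs
  imports "HOL-Probability.Probability"
begin

text \<open>Right and left derivatives of a real function (for convex functions these limits exist).\<close>
definition right_deriv :: "(real \<Rightarrow> real) \<Rightarrow> real \<Rightarrow> real" where
  "right_deriv f t = Lim (at_right t) (\<lambda>u. (f u - f t) / (u - t))"

definition left_deriv :: "(real \<Rightarrow> real) \<Rightarrow> real \<Rightarrow> real" where
  "left_deriv f t = Lim (at_left t) (\<lambda>u. (f u - f t) / (u - t))"

definition emp_crit :: "('a \<Rightarrow> real \<Rightarrow> real) \<Rightarrow> real \<Rightarrow> (nat \<Rightarrow> 'w \<Rightarrow> 'a) \<Rightarrow> nat \<Rightarrow> 'w \<Rightarrow> real \<Rightarrow> real" where
  "emp_crit h t0 X n \<omega> t = (1 / real n) * (\<Sum>i=1..n. h (X i \<omega>) t - h (X i \<omega>) t0)"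

definition last_exit :: "(nat \<Rightarrow> 'w \<Rightarrow> real) \<Rightarrow> real \<Rightarrow> real \<Rightarrow> 'w \<Rightarrow> enat" where
  "last_exit mhat m \<epsilon> \<omega> = Sup (enat ` {k. 1 \<le> k \<and> \<epsilon> < \<bar>mhat k \<omega> - m\<bar>})"

definition enat_powr :: "enat \<Rightarrow> real \<Rightarrow> ennreal" where
  "enat_powr L r = (case L of enat k \<Rightarrow> ennreal (real k powr r) | \<infinity> \<Rightarrow> \<infinity>)"

end

theory Submission
  imports Defs
begin

text \<open>If \<open>\<bar>m\<^sub>k - m\<bar> > \<epsilon>\<close>, convexity forces the right derivative of the \<open>k\<close>-th empirical
  criterion to be negative at \<open>m + e\<close> or nonnegative at \<open>m - e\<close> (with \<open>e = min \<epsilon> x\<^sub>0\<close>), i.e. one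
  of the random walks \<open>\<Sum>\<^sub>i\<^sub>\<le>\<^sub>k D\<^sup>+h(X\<^sub>i, m + e)\<close> and \<open>-\<Sum>\<^sub>i\<^sub>\<le>\<^sub>k D\<^sup>+h(X\<^sub>i, m - e)\<close> is nonpositive at time \<open>k\<close>.
  Both walks have positive drift since \<open>m\<close> is the unique minimiser of \<open>M\<close>, so \<open>L\<^sub>\<epsilon>\<close> is at most
  the larger of their last nonpositive times, and it suffices to bound \<open>E T\<^sup>r\<close> for the last
  nonpositive time \<open>T\<close> of such a walk. With \<open>R = max r 1\<close>, \<open>T\<^sup>r \<le> 1 + R \<Sum>\<^sub>n\<^sub>\<le>\<^sub>T n\<^sup>R\<^sup>-\<^sup>1\<close> reduces this
  to \<open>\<Sum>\<^sub>n n\<^sup>R\<^sup>-\<^sup>1 P(T \<ge> n) < \<infinity>\<close>. On \<open>{T \<ge> n}\<close> some partial sum \<open>S\<^sub>k\<close>, \<open>k \<ge> n\<close>, is nonpositive, so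
  either a summand \<open>i \<le> k\<close> lies below \<open>-\<delta> max i n\<close>, which is summable against \<open>n\<^sup>R\<^sup>-\<^sup>1\<close> because
  \<open>R + 1 \<le> s\<close> and the \<open>s\<close>-th moment is finite, or the walk truncated at these levels is
  nonpositive at time \<open>k\<close>, which a Chernoff bound with \<open>\<lambda> = c ln k / k\<close> makes
  \<open>O(n\<^sup>-\<^sup>(\<^sup>R\<^sup>+\<^sup>1\<^sup>) k\<^sup>-\<^sup>2)\<close>.\<close>

section \<open>Convex criteria and their right derivatives\<close>

lemma divide_diff_swap: "(a - b) / (c - d) = (b - a) / (d - c :: real)"
  by (metis minus_diff_eq minus_divide_divide)

lemma convex_on_slope_mono:
  fixes f :: "real \<Rightarrow> real"
  assumes f: "convex_on UNIV f" and "a < u" "u \<le> v"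
  shows "(f u - f a) / (u - a) \<le> (f v - f a) / (v - a)"
proof (cases "u = v")
  case False
  then have "u < v" using assms by simp
  from convex_on_slope_le(1)[OF f _ _ \<open>a < u\<close> this]
  show ?thesis by (simp add: divide_diff_swap)
qed simp

lemma convex_on_slope_left_le_right:
  fixes f :: "real \<Rightarrow> real"
  assumes f: "convex_on UNIV f" and "c < a" "a < u"
  shows "(f a - f c) / (a - c) \<le> (f u - f a) / (u - a)"
  using convex_on_slope_le[OF f _ _ assms(2,3)] by (simp add: divide_diff_swap)

text \<open>The right derivative of a convex function is the infimum of its right secant slopes.\<close>

lemma convex_on_right_deriv:
  fixes f :: "real \<Rightarrow> real"
  assumes f: "convex_on UNIV f"
  shows "((\<lambda>u. (f u - f a) / (u - a)) \<longlongrightarrow> right_deriv f a) (at_right a)"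
    and "\<And>u. a < u \<Longrightarrow> right_deriv f a \<le> (f u - f a) / (u - a)"
    and "\<And>c. c < a \<Longrightarrow> (f a - f c) / (a - c) \<le> right_deriv f a"
proof -
  define q where "q u = (f u - f a) / (u - a)" for u
  define D where "D = Inf (q ` {a<..})"
  have bdd: "bdd_below (q ` {a<..})"
    unfolding bdd_below_def using convex_on_slope_left_le_right[OF f, of "a - 1" a] by (auto simp: q_def)
  have D_le: "D \<le> q u" if "a < u" for u
    unfolding D_def using bdd that by (auto intro: cInf_lower)
  have slope_le_D: "(f a - f c) / (a - c) \<le> D" if "c < a" for c
    unfolding D_def using convex_on_slope_left_le_right[OF f that]
    by (intro cInf_greatest) (auto simp: q_def)
  have lim: "(q \<longlongrightarrow> D) (at_right a)"
  proof (rule order_tendstoI)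
    fix y assume "y < D"
    then show "eventually (\<lambda>u. y < q u) (at_right a)"
      using D_le unfolding eventually_at_right_field
      by (intro exI[of _ "a + 1"]) (auto intro: less_le_trans)
  next
    fix y assume "D < y"
    then obtain u where u: "a < u" "q u < y"
      unfolding D_def using cInf_lessD[of "q ` {a<..}" y] by auto
    have "q v < y" if "a < v" "v < u" for v
      using convex_on_slope_mono[OF f, of a v u] that u by (simp add: q_def)
    then show "eventually (\<lambda>v. q v < y) (at_right a)"
      using u(1) unfolding eventually_at_right_field by blast
  qed
  then have D: "right_deriv f a = D"
    unfolding right_deriv_def q_def[abs_def, symmetric] by (intro tendsto_Lim) auto
  show "((\<lambda>u. (f u - f a) / (u - a)) \<longlongrightarrow> right_deriv f a) (at_right a)"
    using lim D by (simp add: q_def[abs_def])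
  show "\<And>u. a < u \<Longrightarrow> right_deriv f a \<le> (f u - f a) / (u - a)"
    using D_le D by (simp add: q_def)
  show "\<And>c. c < a \<Longrightarrow> (f a - f c) / (a - c) \<le> right_deriv f a"
    using slope_le_D D by simp
qed

lemma convex_on_sum_funs:
  fixes F :: "'i \<Rightarrow> real \<Rightarrow> real"
  assumes "finite I" "\<And>i. i \<in> I \<Longrightarrow> convex_on UNIV (F i)"
  shows "convex_on UNIV (\<lambda>t. \<Sum>i\<in>I. F i t)"
  using assms by (induction I rule: finite_induct) (auto simp: convex_on_const)

lemma right_deriv_sum:
  fixes F :: "'i \<Rightarrow> real \<Rightarrow> real"
  assumes "finite I" "\<And>i. i \<in> I \<Longrightarrow> convex_on UNIV (F i)"
  shows "right_deriv (\<lambda>t. \<Sum>i\<in>I. F i t) a = (\<Sum>i\<in>I. right_deriv (F i) a)"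
proof -
  have "((\<lambda>u. \<Sum>i\<in>I. (F i u - F i a) / (u - a)) \<longlongrightarrow> (\<Sum>i\<in>I. right_deriv (F i) a)) (at_right a)"
    using assms by (intro tendsto_sum convex_on_right_deriv(1)) auto
  moreover have "(\<lambda>u. ((\<Sum>i\<in>I. F i u) - (\<Sum>i\<in>I. F i a)) / (u - a))
      = (\<lambda>u. \<Sum>i\<in>I. (F i u - F i a) / (u - a))"
    by (simp add: fun_eq_iff sum_divide_distrib[symmetric] sum_subtractf)
  ultimately show ?thesis
    unfolding right_deriv_def by (intro tendsto_Lim) auto
qed

lemma convex_on_abs_diff_le:
  fixes f :: "real \<Rightarrow> real"
  assumes f: "convex_on UNIV f"
  shows "\<bar>f t - f u\<bar> \<le> \<bar>t - u\<bar> * (\<bar>right_deriv f t\<bar> + \<bar>right_deriv f u\<bar>)"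
proof -
  have *: "\<bar>f y - f x\<bar> \<le> (y - x) * (\<bar>right_deriv f x\<bar> + \<bar>right_deriv f y\<bar>)" if "x < y" for x y
  proof -
    have "\<bar>(f y - f x) / (y - x)\<bar> \<le> \<bar>right_deriv f x\<bar> + \<bar>right_deriv f y\<bar>"
      using convex_on_right_deriv(2,3)[OF f that] by linarith
    then show ?thesis using that by (simp add: divide_le_eq mult.commute)
  qed
  consider "u < t" | "t = u" | "t < u" by linarith
  then show ?thesis
  proof cases
    case 1
    then show ?thesis using *[OF 1] by (simp add: ac_simps)
  next
    case 3
    then show ?thesis using *[OF 3] by (simp add: abs_minus_commute add.commute)
  qed simp
qed

lemma right_deriv_neg_below_least_minimizer:
  fixes G :: "real \<Rightarrow> real"
  assumes G: "convex_on UNIV G" and min: "\<And>t. G m \<le> G t"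
    and least: "\<And>t. (\<forall>u. G t \<le> G u) \<Longrightarrow> m \<le> t" and "a < m"
  shows "right_deriv G a < 0"
proof (rule ccontr)
  assume "\<not> right_deriv G a < 0"
  then have "0 \<le> (G m - G a) / (m - a)"
    using convex_on_right_deriv(2)[OF G \<open>a < m\<close>] by linarith
  then have "G a \<le> G m" using \<open>a < m\<close> by (simp add: zero_le_divide_iff)
  then have "m \<le> a" using min by (intro least) (meson order_trans)
  then show False using \<open>a < m\<close> by simp
qed

lemma right_deriv_nonneg_above_minimizer:
  fixes G :: "real \<Rightarrow> real"
  assumes G: "convex_on UNIV G" and min: "\<And>t. G m \<le> G t" and "m < b"
  shows "0 \<le> right_deriv G b"
proof -
  have "0 \<le> (G b - G m) / (b - m)" using min[of b] \<open>m < b\<close> by simp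
  also have "\<dots> \<le> right_deriv G b" using convex_on_right_deriv(3)[OF G \<open>m < b\<close>] .
  finally show ?thesis .
qed

lemma emp_crit_le_iff:
  assumes "1 \<le> n"
  shows "emp_crit h t0 X n \<omega> t \<le> emp_crit h t0 X n \<omega> u
     \<longleftrightarrow> (\<Sum>i=1..n. h (X i \<omega>) t) \<le> (\<Sum>i=1..n. h (X i \<omega>) u)"
proof -
  have "0 < 1 / real n" using assms by simp
  then show ?thesis
    unfolding emp_crit_def sum_subtractf mult_le_cancel_left_pos[OF \<open>0 < 1 / real n\<close>] by linarith
qed

lemma integrable_convex_increment:
  fixes h :: "'a \<Rightarrow> real \<Rightarrow> real"
  assumes h_meas: "\<And>t. (\<lambda>x. h x t) \<in> borel_measurable Q"
    and h_convex: "\<And>x. x \<in> space Q \<Longrightarrow> convex_on UNIV (h x)"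
    and int_right: "\<And>t. integrable Q (\<lambda>x. right_deriv (h x) t)"
  shows "integrable Q (\<lambda>x. h x t - h x u)"
proof (rule Bochner_Integration.integrable_bound)
  show "integrable Q (\<lambda>x. \<bar>t - u\<bar> * (\<bar>right_deriv (h x) t\<bar> + \<bar>right_deriv (h x) u\<bar>))"
    using int_right by auto
  show "(\<lambda>x. h x t - h x u) \<in> borel_measurable Q" using h_meas by measurable
  show "AE x in Q. norm (h x t - h x u) \<le> norm (\<bar>t - u\<bar> * (\<bar>right_deriv (h x) t\<bar> + \<bar>right_deriv (h x) u\<bar>))"
    using convex_on_abs_diff_le[OF h_convex] by (intro AE_I2) (simp add: abs_mult)
qed

lemma integral_increment_divide:
  fixes h :: "'a \<Rightarrow> real \<Rightarrow> real"
  assumes h_meas: "\<And>t. (\<lambda>x. h x t) \<in> borel_measurable Q"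
    and h_convex: "\<And>x. x \<in> space Q \<Longrightarrow> convex_on UNIV (h x)"
    and int_right: "\<And>t. integrable Q (\<lambda>x. right_deriv (h x) t)"
  shows "((\<integral>x. h x u - h x t0 \<partial>Q) - (\<integral>x. h x v - h x t0 \<partial>Q)) / d = (\<integral>x. (h x u - h x v) / d \<partial>Q)"
proof -
  note int = integrable_convex_increment[OF h_meas h_convex int_right]
  have "(\<integral>x. h x u - h x t0 \<partial>Q) - (\<integral>x. h x v - h x t0 \<partial>Q) = (\<integral>x. h x u - h x v \<partial>Q)"
    by (simp add: Bochner_Integration.integral_diff[OF int int, symmetric])
  then show ?thesis by simp
qed

lemma slope_le_integral_right_deriv:
  fixes h :: "'a \<Rightarrow> real \<Rightarrow> real"
  assumes h_meas: "\<And>t. (\<lambda>x. h x t) \<in> borel_measurable Q"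
    and h_convex: "\<And>x. x \<in> space Q \<Longrightarrow> convex_on UNIV (h x)"
    and int_right: "\<And>t. integrable Q (\<lambda>x. right_deriv (h x) t)"
    and "c < a"
  shows "((\<integral>x. h x a - h x t0 \<partial>Q) - (\<integral>x. h x c - h x t0 \<partial>Q)) / (a - c) \<le> (\<integral>x. right_deriv (h x) a \<partial>Q)"
proof -
  have "((\<integral>x. h x a - h x t0 \<partial>Q) - (\<integral>x. h x c - h x t0 \<partial>Q)) / (a - c) = (\<integral>x. (h x a - h x c) / (a - c) \<partial>Q)"
    by (rule integral_increment_divide[OF h_meas h_convex int_right])
  also have "\<dots> \<le> (\<integral>x. right_deriv (h x) a \<partial>Q)"
  proof (rule integral_mono)
    show "integrable Q (\<lambda>x. (h x a - h x c) / (a - c))"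
      using integrable_convex_increment[OF h_meas h_convex int_right] by simp
    show "(h x a - h x c) / (a - c) \<le> right_deriv (h x) a" if "x \<in> space Q" for x
      using convex_on_right_deriv(3)[OF h_convex[OF that] \<open>c < a\<close>] .
  qed (rule int_right)
  finally show ?thesis .
qed

lemma integral_right_deriv_le_slope:
  fixes h :: "'a \<Rightarrow> real \<Rightarrow> real"
  assumes h_meas: "\<And>t. (\<lambda>x. h x t) \<in> borel_measurable Q"
    and h_convex: "\<And>x. x \<in> space Q \<Longrightarrow> convex_on UNIV (h x)"
    and int_right: "\<And>t. integrable Q (\<lambda>x. right_deriv (h x) t)"
    and "b < c"
  shows "(\<integral>x. right_deriv (h x) b \<partial>Q) \<le> ((\<integral>x. h x c - h x t0 \<partial>Q) - (\<integral>x. h x b - h x t0 \<partial>Q)) / (c - b)"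
proof -
  have "(\<integral>x. right_deriv (h x) b \<partial>Q) \<le> (\<integral>x. (h x c - h x b) / (c - b) \<partial>Q)"
  proof (rule integral_mono)
    show "integrable Q (\<lambda>x. (h x c - h x b) / (c - b))"
      using integrable_convex_increment[OF h_meas h_convex int_right] by simp
    show "right_deriv (h x) b \<le> (h x c - h x b) / (c - b)" if "x \<in> space Q" for x
      using convex_on_right_deriv(2)[OF h_convex[OF that] \<open>b < c\<close>] .
  qed (rule int_right)
  also have "\<dots> = ((\<integral>x. h x c - h x t0 \<partial>Q) - (\<integral>x. h x b - h x t0 \<partial>Q)) / (c - b)"
    by (rule integral_increment_divide[OF h_meas h_convex int_right, symmetric])
  finally show ?thesis .
qed

lemma integral_right_deriv_sign_at_unique_minimizer:
  fixes h :: "'a \<Rightarrow> real \<Rightarrow> real"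
  assumes h_meas: "\<And>t. (\<lambda>x. h x t) \<in> borel_measurable Q"
    and h_convex: "\<And>x. x \<in> space Q \<Longrightarrow> convex_on UNIV (h x)"
    and int_right: "\<And>t. integrable Q (\<lambda>x. right_deriv (h x) t)"
    and m_min: "\<forall>t. (\<integral>x. (h x m - h x t0) \<partial>Q) \<le> (\<integral>x. (h x t - h x t0) \<partial>Q)"
    and m_unique: "\<forall>t. (\<forall>u. (\<integral>x. (h x t - h x t0) \<partial>Q) \<le> (\<integral>x. (h x u - h x t0) \<partial>Q)) \<longrightarrow> t = m"
  shows "m < a \<Longrightarrow> 0 < (\<integral>x. right_deriv (h x) a \<partial>Q)"
    and "b < m \<Longrightarrow> (\<integral>x. right_deriv (h x) b \<partial>Q) < 0"
proof -
  have gt: "(\<integral>x. (h x m - h x t0) \<partial>Q) < (\<integral>x. (h x t - h x t0) \<partial>Q)" if "t \<noteq> m" for t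
    using m_min m_unique that by (meson not_le order_trans)
  show "0 < (\<integral>x. right_deriv (h x) a \<partial>Q)" if "m < a"
    using slope_le_integral_right_deriv[OF h_meas h_convex int_right that, of t0] gt[of a] that
    by (smt (verit) divide_pos_pos)
  show "(\<integral>x. right_deriv (h x) b \<partial>Q) < 0" if "b < m"
    using integral_right_deriv_le_slope[OF h_meas h_convex int_right that, of t0] gt[of b] that
    by (smt (verit) divide_neg_pos)
qed

lemma exp_le_quadratic:
  fixes x c :: real
  assumes "x \<le> c" "0 \<le> c"
  shows "exp x \<le> 1 + x + x^2 * exp c"
proof (cases "x < 0")
  case True
  obtain t where t: "exp x = (\<Sum>m<3. x ^ m / fact m) + exp t / fact 3 * x ^ 3"
    using Maclaurin_exp_lt[of x 3] True by auto
  have "exp t / fact 3 * x ^ 3 \<le> 0"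
    using True by (intro mult_nonneg_nonpos) (auto simp: power_odd_eq)
  then have "exp x \<le> 1 + x + x^2 / 2"
    using t by (simp add: numeral_3_eq_3 eval_nat_numeral)
  also have "x^2 / 2 \<le> x^2 * exp c"
  proof -
    have "x^2 * 1 \<le> x^2 * exp c" using assms by (intro mult_left_mono) auto
    then show ?thesis using zero_le_power2[of x] by linarith
  qed
  finally show ?thesis by simp
next
  case False
  obtain t where t: "\<bar>t\<bar> \<le> \<bar>x\<bar>" "exp x = (\<Sum>m<2. x ^ m / fact m) + exp t / fact 2 * x ^ 2"
    using Maclaurin_exp_le[of x 2] by auto
  have "exp t \<le> exp c" using t(1) False assms by simp
  then have "exp t / 2 \<le> exp c" using exp_gt_zero[of t] by linarith
  then have "exp t / 2 * x^2 \<le> exp c * x^2" by (intro mult_right_mono) auto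
  then show ?thesis using t(2) by (simp add: eval_nat_numeral mult.commute)
qed

lemma ln_le_4_powr_quarter:
  assumes "(0::real) < k"
  shows "ln k \<le> 4 * k powr (1/4)"
  using ln_le_minus_one[of "k powr (1/4)"] assms by simp

lemma add_one_powr_le:
  fixes N s :: real
  assumes "0 \<le> N" "0 \<le> s"
  shows "(N + 1) powr s \<le> 2 powr s * (1 + N powr s)"
proof (cases "N \<le> 1")
  case True
  have "(N + 1) powr s \<le> 2 powr s" using assms True by (intro powr_mono2) auto
  then show ?thesis by (simp add: add_increasing2 distrib_left)
next
  case False
  have "(N + 1) powr s \<le> (2 * N) powr s" using assms False by (intro powr_mono2) auto
  also have "\<dots> = 2 powr s * N powr s" using assms by (simp add: powr_mult)
  finally show ?thesis using powr_ge_zero[of 2 s] unfolding distrib_left mult_1_right by linarith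
qed

lemma Suc_powr_le:
  fixes K :: nat and R :: real
  assumes R: "1 \<le> R"
  shows "real (Suc K) powr R \<le> real K powr R + R * real (Suc K) powr (R - 1)"
proof (cases "K = 0")
  case False
  then have K: "1 \<le> real K" by simp
  have der: "((\<lambda>x. x powr R) has_real_derivative R * x powr (R - 1)) (at x)" if "real K \<le> x" for x
    using K that by (intro has_real_derivative_powr) auto
  obtain z where z: "real K < z" "z < real K + 1"
    "(real K + 1) powr R - real K powr R = R * z powr (R - 1)"
    using MVT2[of "real K" "real K + 1" "\<lambda>x. x powr R", OF _ der] by auto
  have "z powr (R - 1) \<le> (real K + 1) powr (R - 1)"
    using z K R by (intro powr_mono2) auto
  then have "R * z powr (R - 1) \<le> R * (real K + 1) powr (R - 1)"
    using R by (intro mult_left_mono) auto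
  then show ?thesis using z(3) by (simp add: add.commute)
qed (use R in simp)

text \<open>Discrete form of \<open>K^R = R \<integral>\<^sub>0\<^sup>K t^(R-1) dt\<close>.\<close>

lemma powr_le_sum_powr:
  fixes K :: nat and R :: real
  assumes R: "1 \<le> R"
  shows "real K powr R \<le> R * (\<Sum>n\<in>{1..K}. real n powr (R - 1))"
proof (induction K)
  case (Suc K)
  then show ?case using Suc_powr_le[OF R, of K] by (simp add: distrib_left)
qed simp

lemma suminf_eq_top_of_ge_1:
  fixes f :: "nat \<Rightarrow> ennreal"
  assumes f: "\<And>n. 1 \<le> n \<Longrightarrow> 1 \<le> f n"
  shows "(\<Sum>n. f n) = \<infinity>"
proof (rule ccontr)
  assume "(\<Sum>n. f n) \<noteq> \<infinity>"
  then obtain x where x: "(\<Sum>n. f n) = ennreal x" "0 \<le> x"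
    using less_top_ennreal by (metis infinity_ennreal_def top.not_eq_extremum)
  obtain N :: nat where N: "x < real N" using reals_Archimedean2 by blast
  have "of_nat N = (\<Sum>n\<in>{1..N}. (1::ennreal))" by simp
  also have "\<dots> \<le> (\<Sum>n\<in>{1..N}. f n)" using f by (intro sum_mono) auto
  also have "\<dots> \<le> (\<Sum>n. f n)" by (intro sum_le_suminf) auto
  finally have "ennreal (real N) \<le> ennreal x" using x by (simp add: ennreal_of_nat_eq_real_of_nat)
  then show False using N x(2) by simp
qed

lemma ln_squared_mul_sqrt_le:
  fixes k :: real
  assumes "1 \<le> k"
  shows "(ln k)^2 * exp (ln k / 2) \<le> 16 * k"
proof -
  have k: "0 < k" using assms by simp
  have "(ln k)^2 \<le> (4 * k powr (1/4))^2"
    using ln_le_4_powr_quarter[OF k] assms by (intro power_mono) auto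
  also have "\<dots> = 16 * k powr (1/2)"
    using k by (simp add: power2_eq_square powr_add[symmetric])
  finally have "(ln k)^2 * exp (ln k / 2) \<le> 16 * k powr (1/2) * k powr (1/2)"
    using k by (intro mult_mono) (auto simp: powr_def)
  also have "\<dots> = 16 * k" using k by (simp add: powr_add[symmetric])
  finally show ?thesis .
qed

text \<open>The exponent of the Chernoff bound for a sum of \<open>k\<close> summands truncated at the levels
  \<open>-\<delta> max i n\<close>, evaluated at \<open>\<lambda> = c ln k / k\<close>; the choice \<open>c \<delta> = 1/2\<close> keeps the quadratic
  term bounded and makes the linear term decay like \<open>k^-(R+3)\<close>.\<close>

lemma truncated_chernoff_exponent_le:
  fixes k n :: nat and \<mu> \<sigma> R :: real
  assumes k: "1 \<le> k" and nk: "n \<le> k" and \<mu>: "0 < \<mu>" and \<sigma>: "0 \<le> \<sigma>" and R: "0 \<le> R"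
  defines "c \<equiv> (R + 3) / \<mu>" and "\<delta> \<equiv> \<mu> / (2 * (R + 3))"
  defines "l \<equiv> c * ln (real k) / real k"
  shows "(\<Prod>i\<in>{1..k}. exp (- l * \<mu> + l^2 * \<sigma> * exp (l * (\<delta> * real (max i n)))))
           \<le> exp (16 * c^2 * \<sigma>) * real k powr (-(R + 3))"
proof -
  define L where "L = ln (real k)"
  have kpos: "0 < real k" using k by simp
  have L0: "0 \<le> L" unfolding L_def using k by simp
  have l0: "0 \<le> l" unfolding l_def c_def using \<mu> R L0 kpos by (simp add: L_def)
  have "c * \<delta> = 1 / 2" unfolding c_def \<delta>_def using \<mu> R by simp
  then have lk: "l * (\<delta> * real k) = L / 2"
    unfolding l_def L_def using kpos by (simp add: field_simps)
  define b where "b = - l * \<mu> + l^2 * \<sigma> * exp (L / 2)"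
  have "real k * b = - (R + 3) * L + c^2 * \<sigma> * (L^2 * exp (L / 2) / real k)"
    unfolding b_def l_def L_def using kpos \<mu> by (simp add: c_def field_simps power2_eq_square)
  also have "\<dots> \<le> - (R + 3) * L + c^2 * \<sigma> * 16"
    using ln_squared_mul_sqrt_le[of "real k"] k kpos \<sigma>
    by (intro add_left_mono mult_left_mono) (auto simp: L_def divide_le_eq)
  finally have kb: "real k * b \<le> - (R + 3) * L + 16 * c^2 * \<sigma>" by simp
  have "exp (- l * \<mu> + l^2 * \<sigma> * exp (l * (\<delta> * real (max i n)))) \<le> exp b" if "i \<in> {1..k}" for i
  proof -
    have "\<delta> * real (max i n) \<le> \<delta> * real k"
      using that nk \<mu> R by (intro mult_left_mono) (auto simp: \<delta>_def)
    then have "l * (\<delta> * real (max i n)) \<le> L / 2" using lk l0 by (metis mult_left_mono)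
    then show ?thesis unfolding b_def using \<sigma> by (simp add: mult_left_mono)
  qed
  then have "(\<Prod>i\<in>{1..k}. exp (- l * \<mu> + l^2 * \<sigma> * exp (l * (\<delta> * real (max i n))))) \<le> exp (real k * b)"
    using prod_mono[of "{1..k}" "\<lambda>i. exp (- l * \<mu> + l^2 * \<sigma> * exp (l * (\<delta> * real (max i n))))" "\<lambda>_. exp b"]
    by (simp add: exp_of_nat_mult)
  also have "\<dots> \<le> exp (- (R + 3) * L + 16 * c^2 * \<sigma>)" using kb by simp
  also have "\<dots> = exp (16 * c^2 * \<sigma>) * real k powr (-(R + 3))"
    unfolding L_def using kpos by (simp add: powr_def exp_add[symmetric] mult.commute)
  finally show ?thesis .
qed

lemma suminf_suminf_le_square:
  fixes f :: "nat \<Rightarrow> nat \<Rightarrow> ennreal" and N R s :: real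
  assumes N: "0 \<le> N" and R: "1 \<le> R" "R + 1 \<le> s"
    and f: "\<And>n j. f n j \<le> (if real n < N \<and> real j < N then ennreal (N powr (R - 1)) else 0)"
  shows "(\<Sum>n. \<Sum>j. f n j) \<le> ennreal (2 powr s * (1 + N powr s))"
proof -
  define M where "M = nat \<lceil>N\<rceil>"
  define a where "a = N powr (R - 1)"
  have M: "real n < N \<longleftrightarrow> n < M" for n
    unfolding M_def by (metis less_ceiling_iff of_int_of_nat_eq zless_nat_eq_int_zless)
  have "(\<Sum>n. \<Sum>j. f n j) \<le> (\<Sum>n. \<Sum>j. (if n < M \<and> j < M then ennreal a else 0))"
    using f unfolding M a_def by (intro suminf_le summableI)
  also have "\<dots> = (\<Sum>n<M. \<Sum>j<M. ennreal a)"
    by (subst suminf_finite[of "{..<M}"], auto)+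
  also have "\<dots> = ennreal (real M * real M * a)"
    unfolding a_def using N by (simp add: ennreal_mult ennreal_of_nat_eq_real_of_nat mult.assoc)
  also have "real M * real M * a \<le> (N + 1) * (N + 1) * (N + 1) powr (R - 1)"
  proof -
    have "real M \<le> N + 1" unfolding M_def using N by linarith
    moreover have "a \<le> (N + 1) powr (R - 1)" unfolding a_def using N R by (intro powr_mono2) auto
    ultimately show ?thesis using N by (intro mult_mono) (auto simp: a_def)
  qed
  also have "\<dots> = (N + 1) powr (1 + 1 + (R - 1))"
    using N by (simp only: powr_add) simp
  also have "\<dots> = (N + 1) powr (R + 1)" by (simp add: add.commute)
  also have "\<dots> \<le> (N + 1) powr s" using N R by (intro powr_mono) auto
  also have "\<dots> \<le> 2 powr s * (1 + N powr s)" using N R by (intro add_one_powr_le) auto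
  finally show ?thesis by (simp add: ennreal_leI)
qed

lemma enat_le_Sup_imageD:
  fixes S :: "nat set"
  assumes "enat n \<le> Sup (enat ` S)" "1 \<le> n"
  shows "\<exists>k\<in>S. n \<le> k"
proof (rule ccontr)
  assume "\<not> ?thesis"
  then have "Sup (enat ` S) \<le> enat (n - 1)" by (intro Sup_least) auto
  then have "enat n \<le> enat (n - 1)" using assms(1) by (rule order_trans[rotated])
  then show False using assms(2) by simp
qed

lemma enat_powr_le_weighted_count:
  fixes L :: enat and r R :: real
  assumes r: "0 < r" "r \<le> R" and R: "1 \<le> R"
  shows "enat_powr L r \<le> 1 + ennreal R * (\<Sum>n. ennreal (real n powr (R - 1)) * of_bool (1 \<le> n \<and> enat n \<le> L))"
proof (cases L)
  case (enat K)
  have "(\<Sum>n. ennreal (real n powr (R - 1)) * of_bool (1 \<le> n \<and> enat n \<le> L))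
      = (\<Sum>n\<in>{1..K}. ennreal (real n powr (R - 1)) * of_bool (1 \<le> n \<and> enat n \<le> L))"
    by (rule suminf_finite) (auto simp: enat)
  also have "\<dots> = ennreal (\<Sum>n\<in>{1..K}. real n powr (R - 1))"
    by (subst sum_ennreal[symmetric]) (auto simp: enat intro!: sum.cong)
  finally have sum: "(\<Sum>n. ennreal (real n powr (R - 1)) * of_bool (1 \<le> n \<and> enat n \<le> L))
      = ennreal (\<Sum>n\<in>{1..K}. real n powr (R - 1))" .
  have "real K powr r \<le> 1 + real K powr R"
  proof (cases "K = 0")
    case False
    then have "real K powr r \<le> real K powr R" using r by (intro powr_mono) auto
    then show ?thesis by simp
  qed simp
  also have "\<dots> \<le> 1 + R * (\<Sum>n\<in>{1..K}. real n powr (R - 1))"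
    using powr_le_sum_powr[OF R] by simp
  finally have "ennreal (real K powr r) \<le> ennreal (1 + R * (\<Sum>n\<in>{1..K}. real n powr (R - 1)))"
    by (rule ennreal_leI)
  also have "\<dots> = 1 + ennreal R * ennreal (\<Sum>n\<in>{1..K}. real n powr (R - 1))"
  proof -
    have S: "0 \<le> (\<Sum>n\<in>{1..K}. real n powr (R - 1))" by (rule sum_nonneg) simp
    have "ennreal (1 + R * (\<Sum>n\<in>{1..K}. real n powr (R - 1)))
        = ennreal 1 + ennreal (R * (\<Sum>n\<in>{1..K}. real n powr (R - 1)))"
      by (rule ennreal_plus) (use S R in auto)
    also have "ennreal (R * (\<Sum>n\<in>{1..K}. real n powr (R - 1)))
        = ennreal R * ennreal (\<Sum>n\<in>{1..K}. real n powr (R - 1))"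
      by (rule ennreal_mult) (use S R in auto)
    finally show ?thesis by simp
  qed
  finally show ?thesis unfolding enat_powr_def using enat sum by simp
next
  case infinity
  have "(\<Sum>n. ennreal (real n powr (R - 1)) * of_bool (1 \<le> n \<and> enat n \<le> L)) = \<infinity>"
  proof (rule suminf_eq_top_of_ge_1)
    fix n :: nat assume "1 \<le> n"
    then have "1 \<le> real n powr (R - 1)" using R by (intro ge_one_powr_ge_zero) auto
    then show "1 \<le> ennreal (real n powr (R - 1)) * of_bool (1 \<le> n \<and> enat n \<le> L)"
      using \<open>1 \<le> n\<close> infinity by (simp add: ennreal_leI)
  qed
  then show ?thesis using R by (simp add: ennreal_mult_top)
qed

lemma Sup_image_enat_eq_SUP: "Sup (enat ` S) = (SUP k. if k \<in> S then enat k else 0)"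
proof (rule antisym)
  show "Sup (enat ` S) \<le> (SUP k. if k \<in> S then enat k else 0)"
  proof (rule Sup_least)
    fix y assume "y \<in> enat ` S"
    then obtain k where "k \<in> S" "y = enat k" by blast
    then show "y \<le> (SUP k. if k \<in> S then enat k else 0)"
      using SUP_upper[of k UNIV "\<lambda>k. if k \<in> S then enat k else 0"] by (simp only: if_P UNIV_I)
  qed
  show "(SUP k. if k \<in> S then enat k else 0) \<le> Sup (enat ` S)"
    by (rule SUP_least) (auto intro: Sup_upper)
qed

lemma enat_powr_mono:
  assumes "L \<le> L'" "0 \<le> r"
  shows "enat_powr L r \<le> enat_powr L' r"
  using assms by (cases L; cases L') (auto simp: enat_powr_def intro!: ennreal_leI powr_mono2)

lemma enat_powr_max_le: "enat_powr (max L L') r \<le> enat_powr L r + enat_powr L' r"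
  by (cases "L \<le> L'") (auto simp: max_def add_increasing add_increasing2)

section \<open>Last nonpositive time of a random walk with positive drift\<close>

lemma (in prob_space) integrable_power2_of_nn_integral_powr:
  fixes g :: "'a \<Rightarrow> real"
  assumes gm: "g \<in> borel_measurable M"
    and mom: "(\<integral>\<^sup>+x. ennreal (\<bar>g x\<bar> powr s) \<partial>M) < \<infinity>" and s: "2 \<le> s"
  shows "integrable M (\<lambda>x. (g x)^2)"
proof (rule integrableI_bounded)
  show "(\<lambda>x. (g x)^2) \<in> borel_measurable M" using gm by measurable
  have bound: "(g x)^2 \<le> 1 + \<bar>g x\<bar> powr s" for x
  proof (cases "\<bar>g x\<bar> \<le> 1")
    case True
    then show ?thesis by (simp add: abs_square_le_1 add_increasing2)
  next
    case False
    then have "(g x)^2 = \<bar>g x\<bar> powr 2" by simp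
    also have "\<dots> \<le> \<bar>g x\<bar> powr s" using False s by (intro powr_mono) auto
    finally show ?thesis by simp
  qed
  have "(\<integral>\<^sup>+x. ennreal (norm ((g x)^2)) \<partial>M) \<le> (\<integral>\<^sup>+x. 1 + ennreal (\<bar>g x\<bar> powr s) \<partial>M)"
  proof (intro nn_integral_mono)
    fix x
    have "ennreal (norm ((g x)^2)) \<le> ennreal (1 + \<bar>g x\<bar> powr s)"
      using bound by (intro ennreal_leI) simp
    then show "ennreal (norm ((g x)^2)) \<le> 1 + ennreal (\<bar>g x\<bar> powr s)" by simp
  qed
  also have "\<dots> = 1 + (\<integral>\<^sup>+x. ennreal (\<bar>g x\<bar> powr s) \<partial>M)"
    using gm by (subst nn_integral_add) (auto simp: emeasure_space_1)
  finally show "(\<integral>\<^sup>+x. ennreal (norm ((g x)^2)) \<partial>M) < \<infinity>" using mom by (simp add: le_less_trans)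
qed

text \<open>The one-summand factor of the Chernoff bound: truncation from below at \<open>-T\<close> makes the
  exponential moment finite and controlled by the first two moments.\<close>

lemma (in prob_space) nn_integral_exp_neg_truncated_le:
  fixes g :: "'a \<Rightarrow> real"
  assumes gm: "g \<in> borel_measurable M"
    and gi: "integrable M g" and g2: "integrable M (\<lambda>x. (g x)^2)"
    and l: "0 \<le> l" and T: "0 \<le> T"
  shows "(\<integral>\<^sup>+x. ennreal (exp (- l * max (g x) (- T))) \<partial>M)
     \<le> ennreal (exp (- l * (\<integral>x. g x \<partial>M) + l^2 * (\<integral>x. (g x)^2 \<partial>M) * exp (l * T)))"
proof -
  define y where "y x = max (g x) (- T)" for x
  have ym[measurable]: "y \<in> borel_measurable M" unfolding y_def[abs_def] using gm by measurable
  have yi: "integrable M y" unfolding y_def[abs_def] using gi by (intro integrable_max) auto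
  have y_ge: "- l * y x \<le> l * T" for x
    using mult_left_mono[OF max.cobounded2[of "- T" "g x"] l] by (simp add: y_def)
  have y2_le: "(y x)^2 \<le> (g x)^2" for x
    unfolding y_def using T by (cases "g x \<ge> - T") (auto simp: max_def abs_le_square_iff[symmetric])
  have y2i: "integrable M (\<lambda>x. (y x)^2)"
    by (rule Bochner_Integration.integrable_bound[OF g2]) (use y2_le in auto)
  have ei: "integrable M (\<lambda>x. exp (- l * y x))"
    by (rule Bochner_Integration.integrable_bound[OF integrable_const[of "exp (l * T)"]]) (use y_ge in auto)
  have "(\<integral>\<^sup>+x. ennreal (exp (- l * max (g x) (- T))) \<partial>M) = ennreal (\<integral>x. exp (- l * y x) \<partial>M)"
    unfolding y_def[symmetric] using ei by (intro nn_integral_eq_integral) auto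
  also have "(\<integral>x. exp (- l * y x) \<partial>M) \<le> (\<integral>x. 1 - l * y x + (l^2 * exp (l * T)) * (y x)^2 \<partial>M)"
    using ei yi y2i exp_le_quadratic[OF y_ge, of x for x] l T
    by (intro integral_mono) (auto simp: algebra_simps)
  also have "\<dots> = 1 - l * (\<integral>x. y x \<partial>M) + (l^2 * exp (l * T)) * (\<integral>x. (y x)^2 \<partial>M)"
    using yi y2i by (simp add: prob_space)
  also have "\<dots> \<le> 1 - l * (\<integral>x. g x \<partial>M) + (l^2 * exp (l * T)) * (\<integral>x. (g x)^2 \<partial>M)"
  proof -
    have "l * (\<integral>x. g x \<partial>M) \<le> l * (\<integral>x. y x \<partial>M)"
      using gi yi l by (intro mult_left_mono integral_mono) (auto simp: y_def)
    moreover have "(l^2 * exp (l * T)) * (\<integral>x. (y x)^2 \<partial>M) \<le> (l^2 * exp (l * T)) * (\<integral>x. (g x)^2 \<partial>M)"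
      using g2 y2i y2_le by (intro mult_left_mono integral_mono) auto
    ultimately show ?thesis by linarith
  qed
  also have "\<dots> \<le> exp (- l * (\<integral>x. g x \<partial>M) + l^2 * (\<integral>x. (g x)^2 \<partial>M) * exp (l * T))"
    using exp_ge_add_one_self[of "- l * (\<integral>x. g x \<partial>M) + l^2 * (\<integral>x. (g x)^2 \<partial>M) * exp (l * T)"]
    by (simp add: algebra_simps)
  finally show ?thesis by (simp add: ennreal_leI)
qed

lemma (in prob_space) weighted_tail_sums_finite:
  fixes g :: "'a \<Rightarrow> real"
  assumes gm[measurable]: "g \<in> borel_measurable M"
    and mom: "(\<integral>\<^sup>+x. ennreal (\<bar>g x\<bar> powr s) \<partial>M) < \<infinity>" and \<delta>: "0 < \<delta>"
    and R: "1 \<le> R" "R + 1 \<le> s"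
  shows "(\<Sum>n. ennreal (real n powr (R - 1)) * (\<Sum>j. emeasure M {x\<in>space M. g x < -(\<delta> * real (max (Suc j) n))})) < \<infinity>"
proof -
  define E where "E n j = {x\<in>space M. g x < -(\<delta> * real (max (Suc j) n))}" for n j
  have E[measurable]: "E n j \<in> sets M" for n j unfolding E_def by measurable
  define w where "w n = real n powr (R - 1)" for n :: nat
  have "(\<Sum>n. ennreal (w n) * (\<Sum>j. emeasure M (E n j)))
      = (\<Sum>n. \<Sum>j. \<integral>\<^sup>+x. ennreal (w n) * indicator (E n j) x \<partial>M)"
    by (simp add: nn_integral_cmult_indicator[OF E])
  also have "\<dots> = (\<integral>\<^sup>+x. (\<Sum>n. \<Sum>j. ennreal (w n) * indicator (E n j) x) \<partial>M)"
    by (subst nn_integral_suminf, simp, subst nn_integral_suminf) auto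
  also have "\<dots> \<le> (\<integral>\<^sup>+x. ennreal (2 powr s * (1 + (\<bar>g x\<bar> / \<delta>) powr s)) \<partial>M)"
  proof (intro nn_integral_mono suminf_suminf_le_square)
    fix x n j
    let ?N = "\<bar>g x\<bar> / \<delta>"
    show "0 \<le> ?N" using \<delta> by simp
    show "ennreal (w n) * indicator (E n j) x
        \<le> (if real n < ?N \<and> real j < ?N then ennreal (?N powr (R - 1)) else 0)"
    proof (cases "x \<in> E n j")
      case True
      then have "\<delta> * real (max (Suc j) n) < \<bar>g x\<bar>" unfolding E_def by auto
      then have "real (max (Suc j) n) < ?N" using \<delta> by (simp add: field_simps)
      then have "real n < ?N" "real j < ?N" by auto
      moreover from this have "w n \<le> ?N powr (R - 1)" unfolding w_def using R by (intro powr_mono2) auto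
      ultimately show ?thesis using True by (simp add: ennreal_leI)
    qed simp
  qed (use R in auto)
  also have "\<dots> = (\<integral>\<^sup>+x. ennreal (2 powr s) + ennreal (2 powr s / \<delta> powr s) * ennreal (\<bar>g x\<bar> powr s) \<partial>M)"
    using \<delta> by (intro nn_integral_cong)
      (simp add: powr_divide distrib_left ennreal_plus[symmetric] ennreal_mult[symmetric] del: ennreal_plus)
  also have "\<dots> = ennreal (2 powr s) + ennreal (2 powr s / \<delta> powr s) * (\<integral>\<^sup>+x. ennreal (\<bar>g x\<bar> powr s) \<partial>M)"
    by (simp add: nn_integral_add nn_integral_cmult emeasure_space_1)
  also have "\<dots> < \<infinity>" using mom by (simp add: ennreal_mult_less_top less_top)
  finally show ?thesis unfolding E_def w_def .
qed

locale iid_sequence = prob_space M for M :: "'w measure" +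
  fixes Q :: "'a measure" and X :: "nat \<Rightarrow> 'w \<Rightarrow> 'a"
  assumes X_measurable: "\<And>i. 1 \<le> i \<Longrightarrow> X i \<in> measurable M Q"
    and X_indep: "indep_vars (\<lambda>_. Q) X {1..}"
    and X_distr: "\<And>i. 1 \<le> i \<Longrightarrow> distr M Q (X i) = Q"

sublocale iid_sequence \<subseteq> Q: prob_space Q
  using prob_space_distr[OF X_measurable[of 1]] X_distr[of 1] by simp

context iid_sequence
begin

lemma X_Suc_measurable[measurable]: "X (Suc j) \<in> measurable M Q"
  using X_measurable by simp

lemma nn_integral_X:
  assumes "1 \<le> i" "f \<in> borel_measurable Q"
  shows "(\<integral>\<^sup>+\<omega>. f (X i \<omega>) \<partial>M) = (\<integral>\<^sup>+x. f x \<partial>Q)"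
  using nn_integral_distr[OF X_measurable[OF assms(1)], of f] X_distr[OF assms(1)] assms(2) by simp

lemma emeasure_X_preimage:
  assumes "1 \<le> i" "A \<in> sets Q"
  shows "emeasure M {\<omega>\<in>space M. X i \<omega> \<in> A} = emeasure Q A"
  using emeasure_distr[OF X_measurable[OF assms(1)] assms(2)] X_distr[OF assms(1)]
  by (simp add: vimage_def Int_def conj_commute)

lemma emeasure_truncated_sum_nonpos_le:
  fixes g :: "'a \<Rightarrow> real"
  assumes gm[measurable]: "g \<in> borel_measurable Q"
    and gi: "integrable Q g" and g2: "integrable Q (\<lambda>x. (g x)^2)"
    and l: "0 \<le> l" and T: "\<And>i. 0 \<le> T i" and I: "finite I" "I \<subseteq> {1..}"
  shows "emeasure M {\<omega>\<in>space M. (\<Sum>i\<in>I. max (g (X i \<omega>)) (- T i)) \<le> 0}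
     \<le> ennreal (\<Prod>i\<in>I. exp (- l * (\<integral>x. g x \<partial>Q) + l^2 * (\<integral>x. (g x)^2 \<partial>Q) * exp (l * T i)))"
proof -
  define F where "F \<omega> = (\<Sum>i\<in>I. max (g (X i \<omega>)) (- T i))" for \<omega>
  define Y where "Y i \<omega> = ennreal (exp (- l * max (g (X i \<omega>)) (- T i)))" for i \<omega>
  have "F \<in> borel_measurable M"
    unfolding F_def[abs_def] using I
    by (intro borel_measurable_sum borel_measurable_max measurable_compose[OF X_measurable gm]) auto
  then have "emeasure M {\<omega>\<in>space M. F \<omega> \<le> 0} = (\<integral>\<^sup>+\<omega>. indicator {\<omega>\<in>space M. F \<omega> \<le> 0} \<omega> \<partial>M)"
    by simp
  also have "\<dots> \<le> (\<integral>\<^sup>+\<omega>. (\<Prod>i\<in>I. Y i \<omega>) \<partial>M)"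
  proof (intro nn_integral_mono)
    fix \<omega>
    have "(\<Prod>i\<in>I. Y i \<omega>) = ennreal (exp (- l * F \<omega>))"
      unfolding Y_def F_def using I by (simp add: prod_ennreal exp_sum sum_distrib_left)
    moreover have "1 \<le> exp (- l * F \<omega>)" if "F \<omega> \<le> 0"
      using l that by (simp add: mult_nonneg_nonpos)
    ultimately show "indicator {\<omega>\<in>space M. F \<omega> \<le> 0} \<omega> \<le> (\<Prod>i\<in>I. Y i \<omega>)"
      by (auto simp: indicator_def)
  qed
  also have "\<dots> = (\<Prod>i\<in>I. \<integral>\<^sup>+\<omega>. Y i \<omega> \<partial>M)"
  proof (rule indep_vars_nn_integral[OF I(1)])
    have "indep_vars (\<lambda>_. borel) (\<lambda>i \<omega>. (\<lambda>i x. ennreal (exp (- l * max (g x) (- T i)))) i (X i \<omega>)) I"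
      by (rule indep_vars_compose2[OF indep_vars_subset[OF X_indep I(2)]]) measurable
    then show "indep_vars (\<lambda>_. borel) Y I" unfolding Y_def[abs_def] by simp
  qed simp
  also have "\<dots> \<le> (\<Prod>i\<in>I. ennreal (exp (- l * (\<integral>x. g x \<partial>Q) + l^2 * (\<integral>x. (g x)^2 \<partial>Q) * exp (l * T i))))"
  proof (rule prod_mono_ennreal)
    fix i assume "i \<in> I"
    then have "(\<integral>\<^sup>+\<omega>. Y i \<omega> \<partial>M) = (\<integral>\<^sup>+x. ennreal (exp (- l * max (g x) (- T i))) \<partial>Q)"
      unfolding Y_def using I by (intro nn_integral_X) auto
    also have "\<dots> \<le> ennreal (exp (- l * (\<integral>x. g x \<partial>Q) + l^2 * (\<integral>x. (g x)^2 \<partial>Q) * exp (l * T i)))"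
      by (rule Q.nn_integral_exp_neg_truncated_le[OF gm gi g2 l T])
    finally show "(\<integral>\<^sup>+\<omega>. Y i \<omega> \<partial>M) \<le> \<dots>" .
  qed
  also have "\<dots> = ennreal (\<Prod>i\<in>I. exp (- l * (\<integral>x. g x \<partial>Q) + l^2 * (\<integral>x. (g x)^2 \<partial>Q) * exp (l * T i)))"
    by (simp add: prod_ennreal)
  finally show ?thesis unfolding F_def .
qed

definition last_nonpos_sum :: "('a \<Rightarrow> real) \<Rightarrow> 'w \<Rightarrow> enat" where
  "last_nonpos_sum g \<omega> = Sup (enat ` {k. 1 \<le> k \<and> (\<Sum>i=1..k. g (X i \<omega>)) \<le> 0})"

definition undershoot_event :: "('a \<Rightarrow> real) \<Rightarrow> real \<Rightarrow> nat \<Rightarrow> nat \<Rightarrow> 'w set" where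
  "undershoot_event g \<delta> n j = {\<omega>\<in>space M. g (X (Suc j) \<omega>) < - (\<delta> * real (max (Suc j) n))}"

definition truncated_sum_event :: "('a \<Rightarrow> real) \<Rightarrow> real \<Rightarrow> nat \<Rightarrow> nat \<Rightarrow> 'w set" where
  "truncated_sum_event g \<delta> n k =
     {\<omega>\<in>space M. n \<le> k \<and> (\<Sum>i=1..k. max (g (X i \<omega>)) (- (\<delta> * real (max i n)))) \<le> 0}"

lemma last_nonpos_sum_measurable:
  assumes gm: "g \<in> borel_measurable Q"
  shows "last_nonpos_sum g \<in> measurable M (count_space UNIV)"
proof -
  have [measurable]: "(\<lambda>\<omega>. \<Sum>i=1..k. g (X i \<omega>)) \<in> borel_measurable M" for k
    by (intro borel_measurable_sum measurable_compose[OF X_measurable gm]) auto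
  show ?thesis
    unfolding last_nonpos_sum_def Sup_image_enat_eq_SUP mem_Collect_eq
    by measurable
qed

lemma truncated_sum_event_measurable[measurable]:
  assumes "g \<in> borel_measurable Q"
  shows "truncated_sum_event g \<delta> n k \<in> sets M"
proof -
  have [measurable]: "(\<lambda>\<omega>. \<Sum>i=1..k. max (g (X i \<omega>)) (- (\<delta> * real (max i n)))) \<in> borel_measurable M"
    using assms by (intro borel_measurable_sum borel_measurable_max measurable_compose[OF X_measurable]) auto
  show ?thesis unfolding truncated_sum_event_def by measurable
qed

lemma undershoot_event_measurable[measurable]:
  assumes [measurable]: "g \<in> borel_measurable Q"
  shows "undershoot_event g \<delta> n j \<in> sets M"
  unfolding undershoot_event_def by measurable

lemma emeasure_undershoot_event:
  assumes [measurable]: "g \<in> borel_measurable Q"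
  shows "emeasure M (undershoot_event g \<delta> n j) = emeasure Q {x\<in>space Q. g x < - (\<delta> * real (max (Suc j) n))}"
proof -
  have "undershoot_event g \<delta> n j = {\<omega>\<in>space M. X (Suc j) \<omega> \<in> {x\<in>space Q. g x < - (\<delta> * real (max (Suc j) n))}}"
    unfolding undershoot_event_def using measurable_space[OF X_Suc_measurable] by auto
  moreover have "{x\<in>space Q. g x < - (\<delta> * real (max (Suc j) n))} \<in> sets Q" by measurable
  ultimately show ?thesis
    using emeasure_X_preimage[of "Suc j" "{x\<in>space Q. g x < - (\<delta> * real (max (Suc j) n))}"] by simp
qed

lemma weighted_undershoot_sums_finite:
  fixes g :: "'a \<Rightarrow> real"
  assumes gm: "g \<in> borel_measurable Q"
    and mom: "(\<integral>\<^sup>+x. ennreal (\<bar>g x\<bar> powr s) \<partial>Q) < \<infinity>" and \<delta>: "0 < \<delta>"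
    and R: "1 \<le> R" "R + 1 \<le> s"
  shows "(\<Sum>n. ennreal (real n powr (R - 1)) * (\<Sum>j. emeasure M (undershoot_event g \<delta> n j))) < \<infinity>"
  using Q.weighted_tail_sums_finite[OF gm mom \<delta> R] by (simp add: emeasure_undershoot_event[OF gm])

lemma emeasure_truncated_sum_event_le:
  fixes g :: "'a \<Rightarrow> real"
  defines "\<mu> \<equiv> \<integral>x. g x \<partial>Q" and "\<sigma> \<equiv> \<integral>x. (g x)^2 \<partial>Q"
  assumes gm: "g \<in> borel_measurable Q" and gi: "integrable Q g" and g2: "integrable Q (\<lambda>x. (g x)^2)"
    and \<mu>: "0 < \<mu>" and R: "1 \<le> R" and n: "1 \<le> n"
  shows "emeasure M (truncated_sum_event g (\<mu> / (2 * (R + 3))) n k)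
     \<le> ennreal (exp (16 * ((R + 3) / \<mu>)^2 * \<sigma>) * real n powr (-(R + 1)) * real k powr (-2))"
proof (cases "n \<le> k")
  case True
  define l where "l = (R + 3) / \<mu> * ln (real k) / real k"
  have l: "0 \<le> l" unfolding l_def using \<mu> R True n by (intro divide_nonneg_nonneg mult_nonneg_nonneg) auto
  have \<sigma>: "0 \<le> \<sigma>" unfolding \<sigma>_def by simp
  have "emeasure M (truncated_sum_event g (\<mu> / (2 * (R + 3))) n k) = emeasure M
      {\<omega>\<in>space M. (\<Sum>i\<in>{1..k}. max (g (X i \<omega>)) (- (\<mu> / (2 * (R + 3)) * real (max i n)))) \<le> 0}"
    unfolding truncated_sum_event_def using True by simp
  also have "\<dots>
      \<le> ennreal (\<Prod>i\<in>{1..k}. exp (- l * \<mu> + l^2 * \<sigma> * exp (l * (\<mu> / (2 * (R + 3)) * real (max i n)))))"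
  proof -
    have "0 \<le> \<mu> / (2 * (R + 3)) * real (max i n)" for i using \<mu> R by simp
    then show ?thesis
      unfolding \<mu>_def \<sigma>_def by (intro emeasure_truncated_sum_nonpos_le[OF gm gi g2 l]) auto
  qed
  also have "\<dots> \<le> ennreal (exp (16 * ((R + 3) / \<mu>)^2 * \<sigma>) * real k powr (-(R + 3)))"
    unfolding l_def using True n \<mu> \<sigma> R by (intro ennreal_leI truncated_chernoff_exponent_le) simp_all
  also have "\<dots> \<le> ennreal (exp (16 * ((R + 3) / \<mu>)^2 * \<sigma>) * real n powr (-(R + 1)) * real k powr (-2))"
  proof (intro ennreal_leI)
    have "real k powr (-(R + 3)) = real k powr (-(R + 1) + (-2))" by (simp add: algebra_simps)
    also have "\<dots> = real k powr (-(R + 1)) * real k powr (-2)" by (rule powr_add)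
    also have "\<dots> \<le> real n powr (-(R + 1)) * real k powr (-2)"
      using True n R by (intro mult_right_mono powr_mono2') auto
    finally show "exp (16 * ((R + 3) / \<mu>)^2 * \<sigma>) * real k powr (-(R + 3))
        \<le> exp (16 * ((R + 3) / \<mu>)^2 * \<sigma>) * real n powr (-(R + 1)) * real k powr (-2)"
      unfolding mult.assoc by (rule mult_left_mono) simp
  qed
  finally show ?thesis .
qed (simp add: truncated_sum_event_def)

lemma weighted_truncated_sum_events_finite:
  fixes g :: "'a \<Rightarrow> real"
  assumes gm: "g \<in> borel_measurable Q" and gi: "integrable Q g" and g2: "integrable Q (\<lambda>x. (g x)^2)"
    and \<mu>: "0 < (\<integral>x. g x \<partial>Q)" and R: "1 \<le> R"
  shows "(\<Sum>n. ennreal (real n powr (R - 1))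
           * (\<Sum>k. emeasure M (truncated_sum_event g ((\<integral>x. g x \<partial>Q) / (2 * (R + 3))) n k))) < \<infinity>"
proof -
  define K where "K = exp (16 * ((R + 3) / (\<integral>x. g x \<partial>Q))^2 * (\<integral>x. (g x)^2 \<partial>Q))"
  define Z where "Z = (\<Sum>k. real k powr (-2))"
  have Z: "summable (\<lambda>k. real k powr (-2::real))" by (subst summable_real_powr_iff) simp
  have "0 \<le> Z" unfolding Z_def by (intro suminf_nonneg Z) simp
  have term_le: "ennreal (real n powr (R - 1))
      * (\<Sum>k. emeasure M (truncated_sum_event g ((\<integral>x. g x \<partial>Q) / (2 * (R + 3))) n k))
      \<le> ennreal (K * Z * real n powr (-2))" for n
  proof (cases "n = 0")
    case False
    have "(\<Sum>k. emeasure M (truncated_sum_event g ((\<integral>x. g x \<partial>Q) / (2 * (R + 3))) n k))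
        \<le> (\<Sum>k. ennreal (K * real n powr (-(R + 1)) * real k powr (-2)))"
      unfolding K_def using False by (intro suminf_le emeasure_truncated_sum_event_le gm gi g2 \<mu> R) auto
    also have "\<dots> = ennreal (K * real n powr (-(R + 1)) * Z)"
      unfolding Z_def K_def by (subst suminf_ennreal2) (auto intro!: summable_mult Z simp: suminf_mult Z)
    finally have "ennreal (real n powr (R - 1))
        * (\<Sum>k. emeasure M (truncated_sum_event g ((\<integral>x. g x \<partial>Q) / (2 * (R + 3))) n k))
        \<le> ennreal (real n powr (R - 1)) * ennreal (K * real n powr (-(R + 1)) * Z)"
      by (rule mult_left_mono) simp
    also have "\<dots> = ennreal (K * Z * real n powr (-2))"
    proof -
      have "real n powr (R - 1) * (K * real n powr (-(R + 1)) * Z) = K * Z * real n powr (-2)"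
        by (simp add: ac_simps powr_add[symmetric])
      then show ?thesis using \<open>0 \<le> Z\<close> by (simp add: K_def ennreal_mult[symmetric])
    qed
    finally show ?thesis .
  qed simp
  have "(\<Sum>n. ennreal (real n powr (R - 1))
      * (\<Sum>k. emeasure M (truncated_sum_event g ((\<integral>x. g x \<partial>Q) / (2 * (R + 3))) n k)))
      \<le> (\<Sum>n. ennreal (K * Z * real n powr (-2)))"
    by (intro suminf_le term_le) auto
  also have "\<dots> = ennreal (\<Sum>n. K * Z * real n powr (-2))"
    using \<open>0 \<le> Z\<close> by (intro suminf_ennreal2 summable_mult Z) (auto simp: K_def)
  finally show ?thesis by (simp add: le_less_trans)
qed

text \<open>A nonpositive partial sum either has a summand below its truncation level, or its
  truncated version is nonpositive as well.\<close>

lemma one_le_undershoots_plus_truncated_sums: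
  assumes \<omega>: "\<omega> \<in> space M" and nk: "n \<le> k" and S: "(\<Sum>i=1..k. g (X i \<omega>)) \<le> 0"
  shows "1 \<le> (\<Sum>j. indicator (undershoot_event g \<delta> n j) \<omega>)
              + (\<Sum>k. indicator (truncated_sum_event g \<delta> n k) \<omega> :: ennreal)"
proof (cases "\<exists>i\<in>{1..k}. g (X i \<omega>) < - (\<delta> * real (max i n))")
  case True
  then obtain i where "1 \<le> i" "g (X i \<omega>) < - (\<delta> * real (max i n))" by auto
  moreover define j where "j = i - 1"
  ultimately have "g (X (Suc j) \<omega>) < - (\<delta> * real (max (Suc j) n))" by simp
  then have "(1::ennreal) = (\<Sum>j'\<in>{j}. indicator (undershoot_event g \<delta> n j') \<omega>)"
    using \<omega> by (simp add: undershoot_event_def)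
  also have "\<dots> \<le> (\<Sum>j. indicator (undershoot_event g \<delta> n j) \<omega>)"
    by (intro sum_le_suminf) auto
  finally show ?thesis by (simp add: add_increasing2)
next
  case False
  then have "(\<Sum>i=1..k. max (g (X i \<omega>)) (- (\<delta> * real (max i n)))) = (\<Sum>i=1..k. g (X i \<omega>))"
    by (intro sum.cong) (auto simp: not_less)
  then have "(1::ennreal) = (\<Sum>k'\<in>{k}. indicator (truncated_sum_event g \<delta> n k') \<omega>)"
    using S nk \<omega> by (simp add: truncated_sum_event_def)
  also have "\<dots> \<le> (\<Sum>k. indicator (truncated_sum_event g \<delta> n k) \<omega>)"
    by (intro sum_le_suminf) auto
  finally show ?thesis by (simp add: add_increasing)
qed

lemma enat_powr_last_nonpos_sum_le:
  assumes \<omega>: "\<omega> \<in> space M" and r: "0 < r" "r \<le> R" and R: "1 \<le> R"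
  shows "enat_powr (last_nonpos_sum g \<omega>) r
    \<le> 1 + ennreal R * (\<Sum>n. ennreal (real n powr (R - 1)) * ((\<Sum>j. indicator (undershoot_event g \<delta> n j) \<omega>)
                                                         + (\<Sum>k. indicator (truncated_sum_event g \<delta> n k) \<omega>)))"
proof -
  have "of_bool (1 \<le> n \<and> enat n \<le> last_nonpos_sum g \<omega>)
      \<le> (\<Sum>j. indicator (undershoot_event g \<delta> n j) \<omega>) + (\<Sum>k. indicator (truncated_sum_event g \<delta> n k) \<omega> :: ennreal)"
    for n
  proof (cases "1 \<le> n \<and> enat n \<le> last_nonpos_sum g \<omega>")
    case True
    then obtain k where "n \<le> k" "(\<Sum>i=1..k. g (X i \<omega>)) \<le> 0"
      unfolding last_nonpos_sum_def by (auto dest: enat_le_Sup_imageD)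
    then show ?thesis using True one_le_undershoots_plus_truncated_sums[OF \<omega>] by simp
  qed (simp only: of_bool_eq(1) zero_le)
  then have "(\<Sum>n. ennreal (real n powr (R - 1)) * of_bool (1 \<le> n \<and> enat n \<le> last_nonpos_sum g \<omega>))
      \<le> (\<Sum>n. ennreal (real n powr (R - 1)) * ((\<Sum>j. indicator (undershoot_event g \<delta> n j) \<omega>)
                                            + (\<Sum>k. indicator (truncated_sum_event g \<delta> n k) \<omega>)))"
    by (intro suminf_le mult_left_mono) auto
  then have "1 + ennreal R * (\<Sum>n. ennreal (real n powr (R - 1)) * of_bool (1 \<le> n \<and> enat n \<le> last_nonpos_sum g \<omega>))
      \<le> 1 + ennreal R * (\<Sum>n. ennreal (real n powr (R - 1)) * ((\<Sum>j. indicator (undershoot_event g \<delta> n j) \<omega>)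
                                                         + (\<Sum>k. indicator (truncated_sum_event g \<delta> n k) \<omega>)))"
    by (intro add_left_mono mult_left_mono) auto
  with enat_powr_le_weighted_count[OF r R] show ?thesis by (rule order_trans)
qed

lemma nn_integral_weighted_event_counts:
  fixes w :: "nat \<Rightarrow> ennreal"
  assumes "g \<in> borel_measurable Q"
  shows "(\<integral>\<^sup>+\<omega>. (\<Sum>n. w n * ((\<Sum>j. indicator (undershoot_event g \<delta> n j) \<omega>)
                              + (\<Sum>k. indicator (truncated_sum_event g \<delta> n k) \<omega>))) \<partial>M)
    = (\<Sum>n. w n * (\<Sum>j. emeasure M (undershoot_event g \<delta> n j)))
      + (\<Sum>n. w n * (\<Sum>k. emeasure M (truncated_sum_event g \<delta> n k)))"
proof -
  note [measurable] = assms
  have "(\<integral>\<^sup>+\<omega>. (\<Sum>n. w n * ((\<Sum>j. indicator (undershoot_event g \<delta> n j) \<omega>)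
                              + (\<Sum>k. indicator (truncated_sum_event g \<delta> n k) \<omega>))) \<partial>M)
      = (\<Sum>n. w n * ((\<Sum>j. emeasure M (undershoot_event g \<delta> n j))
                      + (\<Sum>k. emeasure M (truncated_sum_event g \<delta> n k))))"
    by (simp add: nn_integral_suminf nn_integral_cmult nn_integral_add)
  also have "\<dots> = (\<Sum>n. w n * (\<Sum>j. emeasure M (undershoot_event g \<delta> n j)))
      + (\<Sum>n. w n * (\<Sum>k. emeasure M (truncated_sum_event g \<delta> n k)))"
    unfolding distrib_left by (rule suminf_add[symmetric]) auto
  finally show ?thesis .
qed

lemma nn_integral_enat_powr_last_nonpos_sum_finite:
  fixes g :: "'a \<Rightarrow> real"
  assumes gm: "g \<in> borel_measurable Q" and gi: "integrable Q g"
    and mom: "(\<integral>\<^sup>+x. ennreal (\<bar>g x\<bar> powr s) \<partial>Q) < \<infinity>" and \<mu>: "0 < (\<integral>x. g x \<partial>Q)"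
    and r: "0 < r" "r + 1 \<le> s" and s: "2 \<le> s"
  shows "(\<integral>\<^sup>+\<omega>. enat_powr (last_nonpos_sum g \<omega>) r \<partial>M) < \<infinity>"
proof -
  define R where "R = max r 1"
  have R: "1 \<le> R" "r \<le> R" "R + 1 \<le> s" using r s unfolding R_def by auto
  define \<delta> where "\<delta> = (\<integral>x. g x \<partial>Q) / (2 * (R + 3))"
  have \<delta>: "0 < \<delta>" unfolding \<delta>_def using \<mu> R by simp
  have g2: "integrable Q (\<lambda>x. (g x)^2)" by (rule Q.integrable_power2_of_nn_integral_powr[OF gm mom s])
  let ?count = "\<lambda>\<omega>. \<Sum>n. ennreal (real n powr (R - 1)) * ((\<Sum>j. indicator (undershoot_event g \<delta> n j) \<omega>)
                                                   + (\<Sum>k. indicator (truncated_sum_event g \<delta> n k) \<omega>))"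
  have "(\<integral>\<^sup>+\<omega>. ?count \<omega> \<partial>M) < \<infinity>"
    unfolding nn_integral_weighted_event_counts[OF gm]
    using weighted_undershoot_sums_finite[OF gm mom \<delta> R(1,3)]
      weighted_truncated_sum_events_finite[OF gm gi g2 \<mu> R(1)]
    by (simp add: \<delta>_def less_top[symmetric])
  moreover have "(\<integral>\<^sup>+\<omega>. enat_powr (last_nonpos_sum g \<omega>) r \<partial>M) \<le> (\<integral>\<^sup>+\<omega>. 1 + ennreal R * ?count \<omega> \<partial>M)"
    using enat_powr_last_nonpos_sum_le[OF _ r(1) R(2,1)] by (intro nn_integral_mono) auto
  moreover have "(\<integral>\<^sup>+\<omega>. 1 + ennreal R * ?count \<omega> \<partial>M) = 1 + ennreal R * (\<integral>\<^sup>+\<omega>. ?count \<omega> \<partial>M)"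
    using gm by (simp add: nn_integral_add nn_integral_cmult emeasure_space_1)
  ultimately show ?thesis by (simp add: ennreal_mult_less_top le_less_trans)
qed

lemma last_exit_le_max_last_nonpos_sum:
  fixes h :: "'a \<Rightarrow> real \<Rightarrow> real" and mhat :: "nat \<Rightarrow> 'w \<Rightarrow> real"
  assumes h_convex: "\<And>x. x \<in> space Q \<Longrightarrow> convex_on UNIV (h x)"
    and mhat_min: "\<And>n t. 1 \<le> n \<Longrightarrow> emp_crit h t0 X n \<omega> (mhat n \<omega>) \<le> emp_crit h t0 X n \<omega> t"
    and mhat_smallest: "\<And>n t. 1 \<le> n \<Longrightarrow> (\<forall>u. emp_crit h t0 X n \<omega> t \<le> emp_crit h t0 X n \<omega> u) \<Longrightarrow> mhat n \<omega> \<le> t"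
    and \<omega>: "\<omega> \<in> space M" and e: "0 < e" "e \<le> \<epsilon>"
  shows "last_exit mhat m \<epsilon> \<omega>
    \<le> max (last_nonpos_sum (\<lambda>x. right_deriv (h x) (m + e)) \<omega>) (last_nonpos_sum (\<lambda>x. - right_deriv (h x) (m - e)) \<omega>)"
proof -
  define A where "A = {k. 1 \<le> k \<and> (\<Sum>i=1..k. right_deriv (h (X i \<omega>)) (m + e)) \<le> 0}"
  define B where "B = {k. 1 \<le> k \<and> (\<Sum>i=1..k. - right_deriv (h (X i \<omega>)) (m - e)) \<le> 0}"
  have "k \<in> A \<union> B" if k: "1 \<le> k" "\<epsilon> < \<bar>mhat k \<omega> - m\<bar>" for k
  proof -
    define G where "G t = (\<Sum>i=1..k. h (X i \<omega>) t)" for t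
    have cvx: "convex_on UNIV (h (X i \<omega>))" if "i \<in> {1..k}" for i
      using that \<omega> by (intro h_convex measurable_space[OF X_measurable]) auto
    then have G: "convex_on UNIV G" unfolding G_def[abs_def] by (intro convex_on_sum_funs) auto
    have rd: "right_deriv G a = (\<Sum>i=1..k. right_deriv (h (X i \<omega>)) a)" for a
      unfolding G_def[abs_def] using cvx by (intro right_deriv_sum) auto
    have min: "G (mhat k \<omega>) \<le> G t" for t
      using mhat_min[OF k(1)] unfolding emp_crit_le_iff[OF k(1)] G_def .
    have least: "mhat k \<omega> \<le> t" if "\<forall>u. G t \<le> G u" for t
      using mhat_smallest[OF k(1)] that unfolding emp_crit_le_iff[OF k(1)] G_def by blast
    consider "m + e < mhat k \<omega>" | "mhat k \<omega> < m - e" using k(2) e by linarith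
    then show ?thesis
    proof cases
      case 1
      from right_deriv_neg_below_least_minimizer[OF G min least this] show ?thesis
        using k(1) by (simp add: A_def rd)
    next
      case 2
      from right_deriv_nonneg_above_minimizer[OF G min this] show ?thesis
        using k(1) by (simp add: B_def rd sum_negf)
    qed
  qed
  then have "last_exit mhat m \<epsilon> \<omega> \<le> Sup (enat ` (A \<union> B))"
    unfolding last_exit_def by (intro Sup_subset_mono image_mono) auto
  also have "\<dots> = max (Sup (enat ` A)) (Sup (enat ` B))"
    by (simp add: image_Un Sup_union_distrib sup_max)
  finally show ?thesis by (simp add: last_nonpos_sum_def A_def B_def)
qed

lemma enat_powr_last_nonpos_sum_measurable:
  "g \<in> borel_measurable Q \<Longrightarrow> (\<lambda>\<omega>. enat_powr (last_nonpos_sum g \<omega>) r) \<in> borel_measurable M"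
  using measurable_compose[OF last_nonpos_sum_measurable borel_measurable_count_space] .

lemma nn_integral_enat_powr_last_exit_le:
  fixes h :: "'a \<Rightarrow> real \<Rightarrow> real" and mhat :: "nat \<Rightarrow> 'w \<Rightarrow> real"
  assumes h_convex: "\<And>x. x \<in> space Q \<Longrightarrow> convex_on UNIV (h x)"
    and D_meas: "\<And>t. (\<lambda>x. right_deriv (h x) t) \<in> borel_measurable Q"
    and mhat_min: "\<And>n \<omega> t. 1 \<le> n \<Longrightarrow> \<omega> \<in> space M \<Longrightarrow>
        emp_crit h t0 X n \<omega> (mhat n \<omega>) \<le> emp_crit h t0 X n \<omega> t"
    and mhat_smallest: "\<And>n \<omega> t. 1 \<le> n \<Longrightarrow> \<omega> \<in> space M \<Longrightarrow>
        (\<forall>u. emp_crit h t0 X n \<omega> t \<le> emp_crit h t0 X n \<omega> u) \<Longrightarrow> mhat n \<omega> \<le> t"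
    and e: "0 < e" "e \<le> \<epsilon>" and r: "0 \<le> r"
  shows "(\<integral>\<^sup>+\<omega>. enat_powr (last_exit mhat m \<epsilon> \<omega>) r \<partial>M)
    \<le> (\<integral>\<^sup>+\<omega>. enat_powr (last_nonpos_sum (\<lambda>x. right_deriv (h x) (m + e)) \<omega>) r \<partial>M)
      + (\<integral>\<^sup>+\<omega>. enat_powr (last_nonpos_sum (\<lambda>x. - right_deriv (h x) (m - e)) \<omega>) r \<partial>M)"
proof -
  have "enat_powr (last_exit mhat m \<epsilon> \<omega>) r
      \<le> enat_powr (last_nonpos_sum (\<lambda>x. right_deriv (h x) (m + e)) \<omega>) r
        + enat_powr (last_nonpos_sum (\<lambda>x. - right_deriv (h x) (m - e)) \<omega>) r" if \<omega>: "\<omega> \<in> space M" for \<omega>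
  proof -
    have "last_exit mhat m \<epsilon> \<omega> \<le> max
        (last_nonpos_sum (\<lambda>x. right_deriv (h x) (m + e)) \<omega>)
        (last_nonpos_sum (\<lambda>x. - right_deriv (h x) (m - e)) \<omega>)"
      using h_convex mhat_min[OF _ \<omega>] mhat_smallest[OF _ \<omega>] \<omega> e
      by (rule last_exit_le_max_last_nonpos_sum)
    then have "enat_powr (last_exit mhat m \<epsilon> \<omega>) r \<le> enat_powr (max
        (last_nonpos_sum (\<lambda>x. right_deriv (h x) (m + e)) \<omega>)
        (last_nonpos_sum (\<lambda>x. - right_deriv (h x) (m - e)) \<omega>)) r"
      using r by (rule enat_powr_mono)
    then show ?thesis using enat_powr_max_le by (rule order_trans)
  qed
  then have "(\<integral>\<^sup>+\<omega>. enat_powr (last_exit mhat m \<epsilon> \<omega>) r \<partial>M)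
      \<le> (\<integral>\<^sup>+\<omega>. enat_powr (last_nonpos_sum (\<lambda>x. right_deriv (h x) (m + e)) \<omega>) r
               + enat_powr (last_nonpos_sum (\<lambda>x. - right_deriv (h x) (m - e)) \<omega>) r \<partial>M)"
    by (intro nn_integral_mono) auto
  also have "\<dots> = (\<integral>\<^sup>+\<omega>. enat_powr (last_nonpos_sum (\<lambda>x. right_deriv (h x) (m + e)) \<omega>) r \<partial>M)
      + (\<integral>\<^sup>+\<omega>. enat_powr (last_nonpos_sum (\<lambda>x. - right_deriv (h x) (m - e)) \<omega>) r \<partial>M)"
    using enat_powr_last_nonpos_sum_measurable[OF D_meas]
      enat_powr_last_nonpos_sum_measurable[OF borel_measurable_uminus[OF D_meas]]
    by (rule nn_integral_add)
  finally show ?thesis .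
qed

end

theorem corollary6:
  fixes Q :: "'a measure" and P :: "'w measure"
    and h :: "'a \<Rightarrow> real \<Rightarrow> real" and t0 m s :: real
    and X :: "nat \<Rightarrow> 'w \<Rightarrow> 'a" and mhat :: "nat \<Rightarrow> 'w \<Rightarrow> real"
  assumes Q_prob: "prob_space Q"
    and h_meas: "\<And>t. (\<lambda>x. h x t) \<in> borel_measurable Q"
    and h_convex: "\<And>x. x \<in> space Q \<Longrightarrow> convex_on UNIV (h x)"
    and int_right: "\<And>t. integrable Q (\<lambda>x. right_deriv (h x) t)"
    and int_left: "\<And>t. integrable Q (\<lambda>x. left_deriv (h x) t)"
    and P_prob: "prob_space P"
    and X_meas: "\<And>i. i \<ge> 1 \<Longrightarrow> X i \<in> measurable P Q"
    and X_indep: "prob_space.indep_vars P (\<lambda>_. Q) X {1..}"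
    and X_law: "\<And>i. i \<ge> 1 \<Longrightarrow> distr P Q (X i) = Q"
    and m_min: "\<forall>t. (\<integral>x. (h x m - h x t0) \<partial>Q) \<le> (\<integral>x. (h x t - h x t0) \<partial>Q)"
    and m_unique: "\<forall>t. (\<forall>u. (\<integral>x. (h x t - h x t0) \<partial>Q) \<le> (\<integral>x. (h x u - h x t0) \<partial>Q)) \<longrightarrow> t = m"
    and mhat_meas: "\<And>n. n \<ge> 1 \<Longrightarrow> mhat n \<in> borel_measurable P"
    and mhat_min: "\<And>n \<omega> t. n \<ge> 1 \<Longrightarrow> \<omega> \<in> space P \<Longrightarrow>
        emp_crit h t0 X n \<omega> (mhat n \<omega>) \<le> emp_crit h t0 X n \<omega> t"
    and mhat_smallest: "\<And>n \<omega> t. n \<ge> 1 \<Longrightarrow> \<omega> \<in> space P \<Longrightarrow>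
        (\<forall>u. emp_crit h t0 X n \<omega> t \<le> emp_crit h t0 X n \<omega> u) \<Longrightarrow> mhat n \<omega> \<le> t"
    and s_gt: "s > 2"
    and moment: "\<exists>x0>0. \<forall>x\<in>{-x0..x0}.
        (\<integral>\<^sup>+\<omega>. ennreal (\<bar>right_deriv (h (X 1 \<omega>)) (m + x)\<bar> powr s) \<partial>P) < \<infinity>"
  shows "\<forall>r \<in> {0<..<s/2}. \<forall>\<epsilon>>0.
           (\<integral>\<^sup>+\<omega>. enat_powr (last_exit mhat m \<epsilon> \<omega>) r \<partial>P) < \<infinity>"
proof (intro ballI allI impI)
  fix r \<epsilon> :: real
  assume r: "r \<in> {0<..<s/2}" and \<epsilon>: "0 < \<epsilon>"
  interpret iid_sequence P Q X
    using P_prob X_meas X_indep X_law by (intro iid_sequence.intro iid_sequence_axioms.intro) auto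
  obtain x0 where x0: "0 < x0" "\<forall>y\<in>{-x0..x0}.
      (\<integral>\<^sup>+\<omega>. ennreal (\<bar>right_deriv (h (X 1 \<omega>)) (m + y)\<bar> powr s) \<partial>P) < \<infinity>"
    using moment by blast
  define e where "e = min \<epsilon> x0"
  have e: "0 < e" "e \<le> \<epsilon>" "e \<le> x0" using \<epsilon> x0 by (auto simp: e_def)
  have D_meas: "(\<lambda>x. right_deriv (h x) t) \<in> borel_measurable Q" for t using int_right by auto
  have mom: "(\<integral>\<^sup>+x. ennreal (\<bar>right_deriv (h x) (m + y)\<bar> powr s) \<partial>Q) < \<infinity>" if "y \<in> {-x0..x0}" for y
    using x0(2)[rule_format, OF that] nn_integral_X[of 1 "\<lambda>x. ennreal (\<bar>right_deriv (h x) (m + y)\<bar> powr s)"] D_meas by simp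
  note sign = integral_right_deriv_sign_at_unique_minimizer[OF h_meas h_convex int_right m_min m_unique]
  have "(\<integral>\<^sup>+\<omega>. enat_powr (last_exit mhat m \<epsilon> \<omega>) r \<partial>P)
    \<le> (\<integral>\<^sup>+\<omega>. enat_powr (last_nonpos_sum (\<lambda>x. right_deriv (h x) (m + e)) \<omega>) r \<partial>P)
      + (\<integral>\<^sup>+\<omega>. enat_powr (last_nonpos_sum (\<lambda>x. - right_deriv (h x) (m - e)) \<omega>) r \<partial>P)"
    using r by (intro nn_integral_enat_powr_last_exit_le[OF h_convex D_meas mhat_min mhat_smallest e(1,2)]) auto
  also have "\<dots> < \<infinity>"
  proof -
    have "(\<integral>\<^sup>+\<omega>. enat_powr (last_nonpos_sum (\<lambda>x. right_deriv (h x) (m + e)) \<omega>) r \<partial>P) < \<infinity>"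
      using mom[of e] sign(1)[of "m + e"] e r s_gt D_meas int_right
      by (intro nn_integral_enat_powr_last_nonpos_sum_finite) auto
    moreover have "(\<integral>\<^sup>+\<omega>. enat_powr (last_nonpos_sum (\<lambda>x. - right_deriv (h x) (m - e)) \<omega>) r \<partial>P) < \<infinity>"
      using mom[of "- e"] sign(2)[of "m - e"] e r s_gt D_meas int_right
      by (intro nn_integral_enat_powr_last_nonpos_sum_finite) auto
    ultimately show ?thesis by simp
  qed
  finally show "(\<integral>\<^sup>+\<omega>. enat_powr (last_exit mhat m \<epsilon> \<omega>) r \<partial>P) < \<infinity>" .
qed

end
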